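(* Let $(I_n:\Delta_n^\circ\times\Delta_n^\circ\to\mathbb{R})_{n\ge1}$ be a family of functions (written $I(\mathbf{p}\|\mathbf{q})$). The following are equivalent: (i) the family satisfies (C1) for each $n$ and each fixed $\mathbf{q}$, $\mathbf{p}\mapsto I(\mathbf{p}\|\mathbf{q})$ is Lebesgue measurable, and for each fixed $\mathbf{p}$, $\mathbf{q}\mapsto I(\mathbf{p}\|\mathbf{q})$ is Lebesgue measurable; (C2) $I(\mathbf{p}\sigma\|\mathbf{q}\sigma)=I(\mathbf{p}\|\mathbf{q})$ for every permutation $\sigma$ of $\{1,\dots,n\}$; (C3) $I(\mathbf{p}\|\mathbf{p})=0$ for all $\mathbf{p}\in\Delta_n^\circ$; (C4) for all $n\ge1$, $(\mathbf{p},\mathbf{q})\in\Delta_n^\circ\times\Delta_n^\circ$, integers $k_1,\dots,k_n\ge1$ and $(\boldsymbol{\mu}^i,\boldsymbol{\nu}^i)\in\Delta_{k_i}^\circ\times\Delta_{k_i}^\circ$, $$I(\mathbf{p}\circ\boldsymbol{\mu}\,\|\,\mathbf{q}\circ\boldsymbol{\nu})=I(\mathbf{p}\|\mathbf{q})+\sum_{i=1}^np_iI(\boldsymbol{\mu}^i\|\boldsymbol{\nu}^i);$$ (ii) there is $c\in\mathbb{R}$ such that $I(\mathbf{p}\|\mathbf{q})=c\,H(\mathbf{p}\|\mathbf{q})$ for all $n\ge1$ and all $(\mathbf{p},\mathbf{q})\in\Delta_n^\circ\times\Delta_n^\circ$.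
   Context: $\Delta_n^\circ=\{\mathbf{x}\in(0,1]^n:\sum_ix_i=1\}$ (so $\Delta_1^\circ=\{1\}$). For a permutation $\sigma$, $\mathbf{x}\sigma=(x_{\sigma(1)},\dots,x_{\sigma(n)})$. Composite distribution: for $\mathbf{p}\in\Delta_n^\circ$ and $\boldsymbol{\mu}=(\boldsymbol{\mu}^1,\dots,\boldsymbol{\mu}^n)$ with $\boldsymbol{\mu}^i\in\Delta_{k_i}^\circ$, $\mathbf{p}\circ\boldsymbol{\mu}=(p_1\boldsymbol{\mu}^1,\dots,p_n\boldsymbol{\mu}^n)\in\Delta_{k_1+\cdots+k_n}^\circ$ (concatenation of blocks). Relative entropy: $H(\mathbf{p}\|\mathbf{q})=\sum_ip_i\log(p_i/q_i)$. *)

theory Defs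
  imports "HOL-Analysis.Analysis" "HOL-Combinatorics.Permutations"
begin

definition osimplex :: "nat \<Rightarrow> real list set" where
  "osimplex n = {p. length p = n \<and> (\<forall>x\<in>set p. 0 < x \<and> x \<le> 1) \<and> sum_list p = 1}"

definition permute_vec :: "real list \<Rightarrow> (nat \<Rightarrow> nat) \<Rightarrow> real list" where
  "permute_vec p \<sigma> = map (\<lambda>i. p ! \<sigma> i) [0..<length p]"

definition composite :: "real list \<Rightarrow> real list list \<Rightarrow> real list" where
  "composite p \<mu> = concat (map (\<lambda>(pi, m). map (\<lambda>x. pi * x) m) (zip p \<mu>))"

definition relent :: "real list \<Rightarrow> real list \<Rightarrow> real" where
  "relent p q = (\<Sum>i<length p. p ! i * ln (p ! i / q ! i))"

text \<open>Standard chart of the open simplex of dimension m+1 by its first m coordinates.\<close>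
definition chart_dom :: "nat \<Rightarrow> (nat \<Rightarrow> real) set" where
  "chart_dom m = {x. (\<forall>i<m. 0 < x i) \<and> (\<Sum>i<m. x i) < 1}"

definition chart :: "nat \<Rightarrow> (nat \<Rightarrow> real) \<Rightarrow> real list" where
  "chart m x = map x [0..<m] @ [1 - (\<Sum>i<m. x i)]"

definition lebesgue_m :: "nat \<Rightarrow> (nat \<Rightarrow> real) measure" where
  "lebesgue_m m = completion (Pi\<^sub>M {..<m} (\<lambda>_. lborel))"

text \<open>A function on the open simplex of dimension m+1 is Lebesgue measurable
  if it is so in the chart coordinates.\<close>
definition simplex_measurable :: "nat \<Rightarrow> (real list \<Rightarrow> real) \<Rightarrow> bool" where
  "simplex_measurable m f \<longleftrightarrow>
     (\<lambda>x. if x \<in> chart_dom m then f (chart m x) else 0) \<in> borel_measurable (lebesgue_m m)"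

definition C1 :: "(real list \<Rightarrow> real list \<Rightarrow> real) \<Rightarrow> bool" where
  "C1 I \<longleftrightarrow> (\<forall>m. (\<forall>q \<in> osimplex (Suc m). simplex_measurable m (\<lambda>p. I p q)) \<and>
                  (\<forall>p \<in> osimplex (Suc m). simplex_measurable m (\<lambda>q. I p q)))"

definition C2 :: "(real list \<Rightarrow> real list \<Rightarrow> real) \<Rightarrow> bool" where
  "C2 I \<longleftrightarrow> (\<forall>n p q \<sigma>. p \<in> osimplex n \<longrightarrow> q \<in> osimplex n \<longrightarrow> \<sigma> permutes {..<n} \<longrightarrow>
     I (permute_vec p \<sigma>) (permute_vec q \<sigma>) = I p q)"

definition C3 :: "(real list \<Rightarrow> real list \<Rightarrow> real) \<Rightarrow> bool" where
  "C3 I \<longleftrightarrow> (\<forall>n. \<forall>p \<in> osimplex n. I p p = 0)"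

definition C4 :: "(real list \<Rightarrow> real list \<Rightarrow> real) \<Rightarrow> bool" where
  "C4 I \<longleftrightarrow> (\<forall>n p q \<mu> \<nu>. p \<in> osimplex n \<longrightarrow> q \<in> osimplex n \<longrightarrow>
     length \<mu> = n \<longrightarrow> length \<nu> = n \<longrightarrow>
     (\<forall>i<n. \<exists>k\<ge>1. \<mu> ! i \<in> osimplex k \<and> \<nu> ! i \<in> osimplex k) \<longrightarrow>
     I (composite p \<mu>) (composite q \<nu>) = I p q + (\<Sum>i<n. p ! i * I (\<mu> ! i) (\<nu> ! i)))"

end

theory Submission
  imports Defs
begin

text \<open>On two-point distributions, C2-C4 force
  \<open>I ([x, 1 - x] || [y, 1 - y]) = x L (x / y) + (1 - x) L ((1 - x) / (1 - y))\<close> with \<open>L (a b) = L a + L b\<close>.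
  Splitting a four-point pair into two blocks in two ways shows that a rescaled two-point function separates
  additively in its two arguments; this yields a positively homogeneous contribution \<open>\<pi> psi (\<pi> / \<rho>)\<close> per
  coordinate, and refining one coordinate of a two-point pair shows that \<open>psi\<close> is logarithmic up to an
  explicit correction. Condition C1 makes \<open>L\<close> measurable, and a measurable solution of Cauchy's equation is a
  multiple of \<open>ln\<close>: averaging \<open>cos (\<epsilon> L)\<close> over an interval that is stretched by \<open>r\<close> shows that
  \<open>cos (\<epsilon> L)\<close> is continuous, so \<open>L\<close> is bounded near \<open>1\<close>. Finally, C4 with outer distribution
  \<open>[p1, 1 - p1]\<close> reduces arbitrary distributions to two-point ones by induction on the length.\<close>

section \<open>Open simplices, permutations and composites\<close>

lemma length_osimplex: "p \<in> osimplex n \<Longrightarrow> length p = n"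
  by (simp add: osimplex_def)

lemma osimplex_dim_pos: "p \<in> osimplex n \<Longrightarrow> 1 \<le> n"
  by (cases n) (auto simp: osimplex_def)

lemma osimplex_1_eq: "osimplex 1 = {[1]}"
  by (auto simp: osimplex_def length_Suc_conv)

lemma osimplex_1: "[1] \<in> osimplex 1"
  by (simp add: osimplex_def)

lemma osimplex_2_iff: "[a, b] \<in> osimplex 2 \<longleftrightarrow> 0 < a \<and> 0 < b \<and> a + b = 1"
  by (auto simp: osimplex_def)

lemma osimplex_3_iff: "[a, b, c] \<in> osimplex 3 \<longleftrightarrow> 0 < a \<and> 0 < b \<and> 0 < c \<and> a + b + c = 1"
  by (auto simp: osimplex_def)

lemma osimplex_4_iff:
  "[a, b, c, d] \<in> osimplex 4 \<longleftrightarrow> 0 < a \<and> 0 < b \<and> 0 < c \<and> 0 < d \<and> a + b + c + d = 1"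
  by (auto simp: osimplex_def)

lemma length_permute_vec [simp]: "length (permute_vec p \<sigma>) = length p"
  by (simp add: permute_vec_def)

lemma permute_vec_nth: "i < length p \<Longrightarrow> permute_vec p \<sigma> ! i = p ! \<sigma> i"
  by (simp add: permute_vec_def)

lemma permute_vec_transpose:
  assumes "i < length p" "j < length p"
  shows "permute_vec p (Transposition.transpose i j) = p[i := p ! j, j := p ! i]"
  by (rule nth_equalityI) (use assms in \<open>auto simp: permute_vec_nth nth_list_update transpose_def\<close>)

lemma sum_list_permute_vec:
  assumes "length p = n" "\<sigma> permutes {..<n}"
  shows "sum_list (permute_vec p \<sigma>) = sum_list p"
proof -
  have "sum_list (permute_vec p \<sigma>) = (\<Sum>i<n. p ! \<sigma> i)"
    using assms(1) by (simp add: sum_list_sum_nth permute_vec_nth atLeast0LessThan)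
  also have "\<dots> = (\<Sum>i<n. p ! i)"
    using sum.permute[OF assms(2), of "\<lambda>i. p ! i"] by (simp add: comp_def)
  finally show ?thesis
    using assms(1) by (simp add: sum_list_sum_nth atLeast0LessThan)
qed

lemma permute_vec_osimplex:
  assumes p: "p \<in> osimplex n" and \<sigma>: "\<sigma> permutes {..<n}"
  shows "permute_vec p \<sigma> \<in> osimplex n"
proof -
  have n: "length p = n" using p by (rule length_osimplex)
  have "set (permute_vec p \<sigma>) \<subseteq> set p"
  proof
    fix x assume "x \<in> set (permute_vec p \<sigma>)"
    then obtain i where "i < n" "x = p ! \<sigma> i" using n by (auto simp: permute_vec_def)
    moreover have "\<sigma> i < n" using permutes_in_image[OF \<sigma>] \<open>i < n\<close> by simp
    ultimately show "x \<in> set p" using n by simp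
  qed
  then show ?thesis
    using p n sum_list_permute_vec[OF n \<sigma>] by (auto simp: osimplex_def)
qed

lemma composite_Cons: "composite (a # p) (m # \<mu>) = map ((*) a) m @ composite p \<mu>"
  by (simp add: composite_def)

lemma length_composite:
  "length \<mu> = length p \<Longrightarrow> length (composite p \<mu>) = (\<Sum>i<length p. length (\<mu> ! i))"
proof (induction p arbitrary: \<mu>)
  case (Cons a p)
  then obtain m \<mu>' where "\<mu> = m # \<mu>'" by (cases \<mu>) auto
  with Cons show ?case
    by (simp add: composite_Cons sum.lessThan_Suc_shift del: sum.lessThan_Suc)
qed (simp add: composite_def)

lemma sum_list_composite:
  "length \<mu> = length p \<Longrightarrow> (\<forall>i<length p. sum_list (\<mu> ! i) = 1) \<Longrightarrow>
    sum_list (composite p \<mu>) = sum_list p"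
proof (induction p arbitrary: \<mu>)
  case (Cons a p)
  then obtain m \<mu>' where "\<mu> = m # \<mu>'" by (cases \<mu>) auto
  with Cons.IH Cons.prems show ?case
    by (fastforce simp: composite_Cons sum_list_const_mult)
qed (simp add: composite_def)

lemma set_composite:
  "x \<in> set (composite p \<mu>) \<Longrightarrow> \<exists>i<length p. i < length \<mu> \<and> (\<exists>y\<in>set (\<mu> ! i). x = p ! i * y)"
  by (fastforce simp: composite_def in_set_zip)

lemma composite_osimplex:
  assumes p: "p \<in> osimplex n" and \<mu>: "length \<mu> = n" "\<forall>i<n. \<mu> ! i \<in> osimplex (k i)"
  shows "composite p \<mu> \<in> osimplex (\<Sum>i<n. k i)"
proof -
  have n: "length p = n" using p by (rule length_osimplex)
  have "0 < x \<and> x \<le> 1" if x_in: "x \<in> set (composite p \<mu>)" for x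
  proof -
    obtain i y where i: "i < n" and y: "y \<in> set (\<mu> ! i)" and x: "x = p ! i * y"
      using set_composite[OF x_in] n by blast
    have "0 < p ! i" "p ! i \<le> 1" using p i n by (auto simp: osimplex_def)
    moreover have "0 < y" "y \<le> 1" using \<mu>(2) i y by (auto simp: osimplex_def)
    ultimately show ?thesis using x by (simp add: mult_le_one)
  qed
  moreover have "(\<Sum>i<n. length (\<mu> ! i)) = (\<Sum>i<n. k i)"
    using \<mu>(2) by (intro sum.cong) (auto simp: length_osimplex)
  then have "length (composite p \<mu>) = (\<Sum>i<n. k i)"
    using length_composite[of \<mu> p] \<mu> n by simp
  moreover have "sum_list (composite p \<mu>) = 1"
    using sum_list_composite[of \<mu> p] \<mu> n p by (simp add: osimplex_def)
  ultimately show ?thesis by (simp add: osimplex_def)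
qed

lemma chart_nth:
  "chart m x ! i = (if i < m then x i else if i = m then 1 - (\<Sum>j<m. x j) else [] ! (i - Suc m))"
  by (simp add: chart_def nth_append nth_Cons')

lemma length_chart [simp]: "length (chart m x) = Suc m"
  by (simp add: chart_def)

lemma measurable_chart_nth [measurable]:
  "(\<lambda>x. chart m x ! i) \<in> borel_measurable (Pi\<^sub>M {..<m} (\<lambda>_. lborel))"
proof -
  consider "i < m" | "i = m" | "m < i" by linarith
  then show ?thesis
  proof cases
    case 1
    then show ?thesis by (simp add: chart_nth measurable_component_singleton)
  next
    case 2
    then show ?thesis by (simp add: chart_nth) measurable
  qed (simp add: chart_nth)
qed

lemma pred_chart_dom [measurable]: "Measurable.pred (Pi\<^sub>M {..<m} (\<lambda>_. lborel)) (\<lambda>x. x \<in> chart_dom m)"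
  unfolding chart_dom_def by measurable

lemma chart_osimplex:
  assumes "x \<in> chart_dom m"
  shows "chart m x \<in> osimplex (Suc m)"
proof -
  have pos: "\<And>i. i < m \<Longrightarrow> 0 < x i" and total: "(\<Sum>i<m. x i) < 1"
    using assms by (auto simp: chart_dom_def)
  have "0 < y \<and> y \<le> 1" if "y \<in> set (chart m x)" for y
  proof -
    from that consider i where "i < m" "y = x i" | "y = 1 - (\<Sum>i<m. x i)"
      by (auto simp: chart_def)
    then show ?thesis
    proof cases
      case 1
      then have "x i \<le> (\<Sum>i<m. x i)" using pos by (intro member_le_sum) (auto intro: less_imp_le)
      then show ?thesis using 1 pos total by simp
    next
      case 2
      have "0 \<le> (\<Sum>i<m. x i)" using pos by (intro sum_nonneg) (simp add: less_imp_le)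
      then show ?thesis using 2 total by simp
    qed
  qed
  moreover have "sum_list (map x [0..<m]) = (\<Sum>i<m. x i)"
    by (simp add: sum_list_sum_nth atLeast0LessThan)
  then have "sum_list (chart m x) = 1" by (simp add: chart_def)
  ultimately show ?thesis by (simp add: osimplex_def)
qed

section \<open>Relative entropy\<close>

lemma relent_Nil: "relent [] q = 0"
  by (simp add: relent_def)

lemma relent_Cons: "relent (a # p) (b # q) = a * ln (a / b) + relent p q"
  unfolding relent_def by (simp add: sum.lessThan_Suc_shift del: sum.lessThan_Suc)

lemma relent_self: "relent p p = 0"
  unfolding relent_def by (intro sum.neutral) auto

lemma relent_append:
  "length p = length q \<Longrightarrow> relent (p @ p') (q @ q') = relent p q + relent p' q'"
proof (induction p arbitrary: q)
  case (Cons a p)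
  then obtain b q0 where "q = b # q0" by (cases q) auto
  with Cons show ?case by (simp add: relent_Cons)
qed (simp add: relent_Nil)

lemma relent_map_mult:
  assumes "0 < a" "0 < b" "length m = length n" "\<forall>x\<in>set m. 0 < x" "\<forall>y\<in>set n. 0 < y"
  shows "relent (map ((*) a) m) (map ((*) b) n) = a * sum_list m * ln (a / b) + a * relent m n"
  using assms(3-)
proof (induction m arbitrary: n)
  case (Cons x m)
  then obtain y n' where n: "n = y # n'" by (cases n) auto
  have "0 < x" "0 < y" using Cons.prems n by auto
  then have "ln (a * x / (b * y)) = ln (a / b) + ln (x / y)"
    using assms(1,2) by (simp add: ln_div ln_mult)
  then show ?case using Cons n by (simp add: relent_Cons algebra_simps)
qed (simp add: relent_Nil)

lemma relent_composite:
  assumes "length q = length p" "length \<mu> = length p" "length \<nu> = length p"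
    "\<forall>x\<in>set p. 0 < x" "\<forall>y\<in>set q. 0 < y"
    "\<forall>i<length p. length (\<mu> ! i) = length (\<nu> ! i) \<and> (\<forall>x\<in>set (\<mu> ! i). 0 < x) \<and>
       (\<forall>y\<in>set (\<nu> ! i). 0 < y) \<and> sum_list (\<mu> ! i) = 1"
  shows "relent (composite p \<mu>) (composite q \<nu>) =
    relent p q + (\<Sum>i<length p. p ! i * relent (\<mu> ! i) (\<nu> ! i))"
  using assms
proof (induction p arbitrary: q \<mu> \<nu>)
  case (Cons a p)
  obtain b q' where q: "q = b # q'" using Cons.prems(1) by (cases q) auto
  obtain m \<mu>' where \<mu>: "\<mu> = m # \<mu>'" using Cons.prems(2) by (cases \<mu>) auto
  obtain n \<nu>' where \<nu>: "\<nu> = n # \<nu>'" using Cons.prems(3) by (cases \<nu>) auto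
  have IH: "relent (composite p \<mu>') (composite q' \<nu>') =
      relent p q' + (\<Sum>i<length p. p ! i * relent (\<mu>' ! i) (\<nu>' ! i))"
  proof (rule Cons.IH)
    show "\<forall>i<length p. length (\<mu>' ! i) = length (\<nu>' ! i) \<and> (\<forall>x\<in>set (\<mu>' ! i). 0 < x) \<and>
        (\<forall>y\<in>set (\<nu>' ! i). 0 < y) \<and> sum_list (\<mu>' ! i) = 1"
      using Cons.prems(6) \<mu> \<nu> by auto
  qed (use Cons.prems q \<mu> \<nu> in auto)
  have "0 < a" "0 < b" using Cons.prems(4,5) q by auto
  moreover have "length m = length n" "\<forall>x\<in>set m. 0 < x" "\<forall>y\<in>set n. 0 < y" "sum_list m = 1"
    using Cons.prems(6) \<mu> \<nu> by auto
  ultimately show ?case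
    unfolding q \<mu> \<nu> composite_Cons
    by (simp add: relent_append relent_map_mult IH relent_Cons sum.lessThan_Suc_shift
        algebra_simps del: sum.lessThan_Suc)
qed (simp add: relent_Nil composite_def)

lemma relent_permute_vec:
  assumes "length p = n" "length q = n" "\<sigma> permutes {..<n}"
  shows "relent (permute_vec p \<sigma>) (permute_vec q \<sigma>) = relent p q"
proof -
  define g where "g i = p ! i * ln (p ! i / q ! i)" for i
  have "relent (permute_vec p \<sigma>) (permute_vec q \<sigma>) = (\<Sum>i<n. g (\<sigma> i))"
    unfolding relent_def g_def using assms(1,2) by (intro sum.cong) (auto simp: permute_vec_nth)
  also have "\<dots> = (\<Sum>i<n. g i)"
    using sum.permute[OF assms(3), of g] by (simp add: comp_def)
  finally show ?thesis using assms(1) by (simp add: relent_def g_def)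
qed

lemma C1_relent: "C1 (\<lambda>p q. c * relent p q)"
  unfolding C1_def simplex_measurable_def lebesgue_m_def
proof (intro allI conjI ballI measurable_completion)
  fix m and q :: "real list"
  have "relent (chart m x) q = (\<Sum>i<Suc m. chart m x ! i * ln (chart m x ! i / q ! i))" for x
    by (simp only: relent_def length_chart)
  then show "(\<lambda>x. if x \<in> chart_dom m then c * relent (chart m x) q else 0)
      \<in> borel_measurable (Pi\<^sub>M {..<m} (\<lambda>_. lborel))"
    by (simp only:) measurable
next
  fix m p assume "p \<in> osimplex (Suc m)"
  then have "relent p (chart m x) = (\<Sum>i<Suc m. p ! i * ln (p ! i / chart m x ! i))" for x
    by (simp only: relent_def length_osimplex)
  then show "(\<lambda>x. if x \<in> chart_dom m then c * relent p (chart m x) else 0)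
      \<in> borel_measurable (Pi\<^sub>M {..<m} (\<lambda>_. lborel))"
    by (simp only:) measurable
qed

lemma C2_relent: "C2 (\<lambda>p q. c * relent p q)"
  by (simp add: C2_def relent_permute_vec length_osimplex)

lemma C3_relent: "C3 (\<lambda>p q. c * relent p q)"
  by (simp add: C3_def relent_self)

lemma C4_relent: "C4 (\<lambda>p q. c * relent p q)"
  unfolding C4_def
proof (intro allI impI)
  fix n p q \<mu> \<nu>
  assume pq: "p \<in> osimplex n" "q \<in> osimplex n" and len: "length \<mu> = n" "length \<nu> = n"
    and blocks: "\<forall>i<n. \<exists>k\<ge>1. \<mu> ! i \<in> osimplex k \<and> \<nu> ! i \<in> osimplex k"
  have "length p = n" "length q = n" using pq by (simp_all add: length_osimplex)
  have "\<forall>i<length p. length (\<mu> ! i) = length (\<nu> ! i) \<and> (\<forall>x\<in>set (\<mu> ! i). 0 < x) \<and>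
      (\<forall>y\<in>set (\<nu> ! i). 0 < y) \<and> sum_list (\<mu> ! i) = 1"
  proof (intro allI impI)
    fix i assume "i < length p"
    then obtain k where "\<mu> ! i \<in> osimplex k" "\<nu> ! i \<in> osimplex k"
      using blocks \<open>length p = n\<close> by blast
    then show "length (\<mu> ! i) = length (\<nu> ! i) \<and> (\<forall>x\<in>set (\<mu> ! i). 0 < x) \<and>
        (\<forall>y\<in>set (\<nu> ! i). 0 < y) \<and> sum_list (\<mu> ! i) = 1"
      by (simp add: osimplex_def)
  qed
  moreover have "\<forall>x\<in>set p. 0 < x" "\<forall>y\<in>set q. 0 < y"
    using pq by (simp_all add: osimplex_def)
  ultimately have "relent (composite p \<mu>) (composite q \<nu>) =
      relent p q + (\<Sum>i<length p. p ! i * relent (\<mu> ! i) (\<nu> ! i))"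
    using relent_composite[of q p \<mu> \<nu>] \<open>length p = n\<close> \<open>length q = n\<close> len by simp
  then have "c * relent (composite p \<mu>) (composite q \<nu>) =
      c * relent p q + c * (\<Sum>i<n. p ! i * relent (\<mu> ! i) (\<nu> ! i))"
    using \<open>length p = n\<close> by (simp only: distrib_left)
  also have "c * (\<Sum>i<n. p ! i * relent (\<mu> ! i) (\<nu> ! i)) = (\<Sum>i<n. p ! i * (c * relent (\<mu> ! i) (\<nu> ! i)))"
    by (simp add: sum_distrib_left mult.left_commute)
  finally show "c * relent (composite p \<mu>) (composite q \<nu>) =
      c * relent p q + (\<Sum>i<n. p ! i * (c * relent (\<mu> ! i) (\<nu> ! i)))" .
qed

section \<open>Reduction to two-point distributions\<close>

lemma C2D:
  "C2 I \<Longrightarrow> p \<in> osimplex n \<Longrightarrow> q \<in> osimplex n \<Longrightarrow> \<sigma> permutes {..<n} \<Longrightarrow>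
    I (permute_vec p \<sigma>) (permute_vec q \<sigma>) = I p q"
  unfolding C2_def by blast

lemma C3D: "C3 I \<Longrightarrow> p \<in> osimplex n \<Longrightarrow> I p p = 0"
  unfolding C3_def by blast

lemma C4D:
  assumes "C4 I" "p \<in> osimplex n" "q \<in> osimplex n" "length \<mu> = n" "length \<nu> = n"
    and "\<And>i. i < n \<Longrightarrow> \<mu> ! i \<in> osimplex (k i) \<and> \<nu> ! i \<in> osimplex (k i)"
  shows "I (composite p \<mu>) (composite q \<nu>) = I p q + (\<Sum>i<n. p ! i * I (\<mu> ! i) (\<nu> ! i))"
proof -
  have "\<forall>i<n. \<exists>k\<ge>1. \<mu> ! i \<in> osimplex k \<and> \<nu> ! i \<in> osimplex k"
    using assms(6) osimplex_dim_pos by blast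
  then show ?thesis using assms(1-5) unfolding C4_def by blast
qed

lemma C4_two_blocks:
  assumes "C4 I" "[p1, p2] \<in> osimplex 2" "[q1, q2] \<in> osimplex 2"
    and "\<mu>1 \<in> osimplex k1" "\<nu>1 \<in> osimplex k1" "\<mu>2 \<in> osimplex k2" "\<nu>2 \<in> osimplex k2"
  shows "I (map ((*) p1) \<mu>1 @ map ((*) p2) \<mu>2) (map ((*) q1) \<nu>1 @ map ((*) q2) \<nu>2) =
    I [p1, p2] [q1, q2] + p1 * I \<mu>1 \<nu>1 + p2 * I \<mu>2 \<nu>2"
proof -
  have "[\<mu>1, \<mu>2] ! i \<in> osimplex ([k1, k2] ! i) \<and> [\<nu>1, \<nu>2] ! i \<in> osimplex ([k1, k2] ! i)"
    if "i < 2" for i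
    using that assms(4-) by (auto simp: less_Suc_eq numeral_2_eq_2)
  from C4D[OF assms(1-3) _ _ this] show ?thesis
    by (simp add: composite_def numeral_2_eq_2)
qed

lemma C4_three_blocks:
  assumes "C4 I" "[p1, p2, p3] \<in> osimplex 3" "[q1, q2, q3] \<in> osimplex 3"
    and "\<mu>1 \<in> osimplex k1" "\<nu>1 \<in> osimplex k1" "\<mu>2 \<in> osimplex k2" "\<nu>2 \<in> osimplex k2"
    and "\<mu>3 \<in> osimplex k3" "\<nu>3 \<in> osimplex k3"
  shows "I (map ((*) p1) \<mu>1 @ map ((*) p2) \<mu>2 @ map ((*) p3) \<mu>3)
      (map ((*) q1) \<nu>1 @ map ((*) q2) \<nu>2 @ map ((*) q3) \<nu>3) =
    I [p1, p2, p3] [q1, q2, q3] + p1 * I \<mu>1 \<nu>1 + p2 * I \<mu>2 \<nu>2 + p3 * I \<mu>3 \<nu>3"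
proof -
  have "[\<mu>1, \<mu>2, \<mu>3] ! i \<in> osimplex ([k1, k2, k3] ! i) \<and>
      [\<nu>1, \<nu>2, \<nu>3] ! i \<in> osimplex ([k1, k2, k3] ! i)" if "i < 3" for i
    using that assms(4-) by (auto simp: less_Suc_eq numeral_3_eq_3)
  from C4D[OF assms(1-3) _ _ this] show ?thesis
    by (simp add: composite_def numeral_3_eq_3 add.assoc)
qed

lemma C1_cong:
  assumes "\<And>n p q. p \<in> osimplex n \<Longrightarrow> q \<in> osimplex n \<Longrightarrow> I p q = J p q"
  shows "C1 I \<longleftrightarrow> C1 J"
proof -
  have "(\<lambda>x. if x \<in> chart_dom m then I (chart m x) p else 0) =
        (\<lambda>x. if x \<in> chart_dom m then J (chart m x) p else 0)"
    and "(\<lambda>x. if x \<in> chart_dom m then I p (chart m x) else 0) =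
        (\<lambda>x. if x \<in> chart_dom m then J p (chart m x) else 0)"
    if "p \<in> osimplex (Suc m)" for m p
    using assms[OF chart_osimplex that] assms[OF that chart_osimplex] by (auto intro!: ext)
  then show ?thesis
    unfolding C1_def simplex_measurable_def by simp
qed

lemma C2_cong:
  assumes eq: "\<And>n p q. p \<in> osimplex n \<Longrightarrow> q \<in> osimplex n \<Longrightarrow> I p q = J p q"
  shows "C2 I \<longleftrightarrow> C2 J"
proof -
  have "I (permute_vec p \<sigma>) (permute_vec q \<sigma>) = J (permute_vec p \<sigma>) (permute_vec q \<sigma>)"
    if "p \<in> osimplex n" "q \<in> osimplex n" "\<sigma> permutes {..<n}" for n p q \<sigma>
    using that by (intro eq permute_vec_osimplex)
  then show ?thesis unfolding C2_def using eq by simp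
qed

lemma C3_cong:
  assumes "\<And>n p q. p \<in> osimplex n \<Longrightarrow> q \<in> osimplex n \<Longrightarrow> I p q = J p q"
  shows "C3 I \<longleftrightarrow> C3 J"
  unfolding C3_def using assms by simp

lemma C4_cong:
  assumes eq: "\<And>n p q. p \<in> osimplex n \<Longrightarrow> q \<in> osimplex n \<Longrightarrow> I p q = J p q"
  shows "C4 I \<longleftrightarrow> C4 J"
proof -
  have "I (composite p \<mu>) (composite q \<nu>) = J (composite p \<mu>) (composite q \<nu>)"
    and "(\<Sum>i<n. p ! i * I (\<mu> ! i) (\<nu> ! i)) = (\<Sum>i<n. p ! i * J (\<mu> ! i) (\<nu> ! i))"
    if "p \<in> osimplex n" "q \<in> osimplex n" "length \<mu> = n" "length \<nu> = n"
      and blocks: "\<forall>i<n. \<exists>k\<ge>1. \<mu> ! i \<in> osimplex k \<and> \<nu> ! i \<in> osimplex k" for n p q \<mu> \<nu>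
  proof -
    obtain k where k: "\<forall>i<n. \<mu> ! i \<in> osimplex (k i) \<and> \<nu> ! i \<in> osimplex (k i)"
      using blocks by metis
    then have "composite p \<mu> \<in> osimplex (\<Sum>i<n. k i)" "composite q \<nu> \<in> osimplex (\<Sum>i<n. k i)"
      using that by (auto intro!: composite_osimplex)
    then show "I (composite p \<mu>) (composite q \<nu>) = J (composite p \<mu>) (composite q \<nu>)"
      by (rule eq)
    show "(\<Sum>i<n. p ! i * I (\<mu> ! i) (\<nu> ! i)) = (\<Sum>i<n. p ! i * J (\<mu> ! i) (\<nu> ! i))"
      using k eq by (intro sum.cong) auto
  qed
  then show ?thesis unfolding C4_def using eq by simp
qed

lemma osimplex_Cons_split:
  assumes "a # p \<in> osimplex (Suc (Suc k))"
  shows "0 < a" "a < 1" "map ((*) (1 / (1 - a))) p \<in> osimplex (Suc k)"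
proof -
  have p: "length p = Suc k" "\<forall>x\<in>set p. 0 < x \<and> x \<le> 1" and "0 < a" and sum: "a + sum_list p = 1"
    using assms by (auto simp: osimplex_def)
  have le: "x \<le> sum_list p" if "x \<in> set p" for x
    using p(2) that by (intro member_le_sum_list) auto
  obtain x where "x \<in> set p" using p(1) by (cases p) auto
  then have "0 < sum_list p" using p(2) le by fastforce
  then show "0 < a" "a < 1" using \<open>0 < a\<close> sum by auto
  then show "map ((*) (1 / (1 - a))) p \<in> osimplex (Suc k)"
    using p sum le by (fastforce simp: osimplex_def sum_list_const_mult)
qed

lemma C4_Cons:
  assumes "C3 I" "C4 I" and p: "a # p \<in> osimplex (Suc (Suc k))" and q: "b # q \<in> osimplex (Suc (Suc k))"
  shows "I (a # p) (b # q) =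
    I [a, 1 - a] [b, 1 - b] + (1 - a) * I (map ((*) (1 / (1 - a))) p) (map ((*) (1 / (1 - b))) q)"
proof -
  note a = osimplex_Cons_split[OF p] and b = osimplex_Cons_split[OF q]
  have "[a, 1 - a] \<in> osimplex 2" "[b, 1 - b] \<in> osimplex 2"
    using a b by (simp_all add: osimplex_2_iff)
  note blocks = C4_two_blocks[OF assms(2) this osimplex_1 osimplex_1 a(3) b(3)]
  have "map ((*) a) [1] @ map ((*) (1 - a)) (map ((*) (1 / (1 - a))) p) = a # p"
    "map ((*) b) [1] @ map ((*) (1 - b)) (map ((*) (1 / (1 - b))) q) = b # q"
    using a(2) b(2) by (simp_all add: comp_def)
  then show ?thesis using blocks C3D[OF assms(1) osimplex_1] by simp
qed

lemma eq_on_osimplex_if_two_point_eq: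
  assumes "C3 I" "C4 I" "C3 J" "C4 J"
    and two_point: "\<And>x y. 0 < x \<Longrightarrow> x < 1 \<Longrightarrow> 0 < y \<Longrightarrow> y < 1 \<Longrightarrow>
      I [x, 1 - x] [y, 1 - y] = J [x, 1 - x] [y, 1 - y]"
  shows "p \<in> osimplex n \<Longrightarrow> q \<in> osimplex n \<Longrightarrow> I p q = J p q"
proof (induction n arbitrary: p q rule: less_induct)
  case (less n)
  consider "n = 1" | k where "n = Suc (Suc k)"
    using osimplex_dim_pos[OF less.prems(1)] by (metis One_nat_def Suc_le_D not0_implies_Suc)
  then show ?case
  proof cases
    case 1
    then have "p = [1]" "q = [1]" using less.prems osimplex_1_eq by blast+
    then show ?thesis using C3D[OF assms(1) osimplex_1] C3D[OF assms(3) osimplex_1] by simp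
  next
    case (2 k)
    then obtain a p' b q' where pq: "p = a # p'" "q = b # q'"
      using less.prems by (metis length_Suc_conv length_osimplex)
    then have ap: "a # p' \<in> osimplex (Suc (Suc k))" and bq: "b # q' \<in> osimplex (Suc (Suc k))"
      using less.prems 2 by simp_all
    note a = osimplex_Cons_split[OF ap] and b = osimplex_Cons_split[OF bq]
    show ?thesis
      using C4_Cons[OF assms(1,2) ap bq] C4_Cons[OF assms(3,4) ap bq] less.IH[of "Suc k", OF _ a(3) b(3)]
        two_point[OF a(1,2) b(1,2)] 2
      unfolding pq by simp
  qed
qed

section \<open>The two-point function\<close>

definition two_point :: "(real list \<Rightarrow> real list \<Rightarrow> real) \<Rightarrow> real \<Rightarrow> real \<Rightarrow> real" where
  "two_point I x y = I [x, 1 - x] [y, 1 - y]"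

lemma pair_eq_two_point: "b = 1 - a \<Longrightarrow> d = 1 - c \<Longrightarrow> I [a, b] [c, d] = two_point I a c"
  by (simp add: two_point_def)

lemma two_point_swap:
  assumes "C2 I" "0 < x" "x < 1" "0 < y" "y < 1"
  shows "two_point I (1 - x) (1 - y) = two_point I x y"
proof -
  have "I (permute_vec [x, 1 - x] (Transposition.transpose 0 1))
      (permute_vec [y, 1 - y] (Transposition.transpose 0 1)) = I [x, 1 - x] [y, 1 - y]"
    using assms by (intro C2D[of I _ 2]) (auto simp: osimplex_2_iff intro: permutes_swap_id)
  then show ?thesis by (simp add: two_point_def permute_vec_transpose)
qed

lemma two_point_diag: "C3 I \<Longrightarrow> 0 < x \<Longrightarrow> x < 1 \<Longrightarrow> two_point I x x = 0"
  unfolding two_point_def by (erule C3D[of _ _ 2]) (simp add: osimplex_2_iff)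

text \<open>For \<open>\<alpha>, \<beta> > 1\<close> the vectors \<open>(\<alpha>, \<beta> - 1)\<close> and \<open>(\<alpha> - 1, \<beta>)\<close> have the same total
  \<open>\<alpha> + \<beta> - 1\<close>; \<open>scaled_two_point I \<alpha> \<beta>\<close> is that total times \<open>I\<close> of their normalisations.\<close>

definition scaled_two_point :: "(real list \<Rightarrow> real list \<Rightarrow> real) \<Rightarrow> real \<Rightarrow> real \<Rightarrow> real" where
  "scaled_two_point I \<alpha> \<beta> = (\<alpha> + \<beta> - 1) * two_point I (\<alpha> / (\<alpha> + \<beta> - 1)) ((\<alpha> - 1) / (\<alpha> + \<beta> - 1))"

lemma C4_four_point:
  assumes "C3 I" "C4 I" and gt: "1 < \<alpha>" "1 < \<beta>" "1 < \<alpha>'" "1 < \<beta>'"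
    and M: "M = \<alpha> + \<beta> + \<alpha>' + \<beta>' - 2"
  shows "I [\<alpha> / M, (\<beta> - 1) / M, \<alpha>' / M, (\<beta>' - 1) / M] [(\<alpha> - 1) / M, \<beta> / M, (\<alpha>' - 1) / M, \<beta>' / M] =
    (scaled_two_point I \<alpha> \<beta> + scaled_two_point I \<alpha>' \<beta>') / M"
proof -
  define m where "m = \<alpha> + \<beta> - 1"
  define m' where "m' = \<alpha>' + \<beta>' - 1"
  have m: "1 < m" "1 < m'" and Mm: "M = m + m'" using gt M by (auto simp: m_def m'_def)
  have outer: "[m / M, m' / M] \<in> osimplex 2"
    using m Mm by (simp add: osimplex_2_iff add_divide_distrib[symmetric])
  have sums: "\<alpha> / m + (\<beta> - 1) / m = 1" "(\<alpha> - 1) / m + \<beta> / m = 1"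
    "\<alpha>' / m' + (\<beta>' - 1) / m' = 1" "(\<alpha>' - 1) / m' + \<beta>' / m' = 1"
    using m by (simp_all add: m_def m'_def add_divide_distrib[symmetric])
  have inner: "[\<alpha> / m, (\<beta> - 1) / m] \<in> osimplex 2" "[(\<alpha> - 1) / m, \<beta> / m] \<in> osimplex 2"
    "[\<alpha>' / m', (\<beta>' - 1) / m'] \<in> osimplex 2" "[(\<alpha>' - 1) / m', \<beta>' / m'] \<in> osimplex 2"
    using gt m sums by (auto simp: osimplex_2_iff)
  have "I [\<alpha> / M, (\<beta> - 1) / M, \<alpha>' / M, (\<beta>' - 1) / M] [(\<alpha> - 1) / M, \<beta> / M, (\<alpha>' - 1) / M, \<beta>' / M] =
      m / M * two_point I (\<alpha> / m) ((\<alpha> - 1) / m) + m' / M * two_point I (\<alpha>' / m') ((\<alpha>' - 1) / m')"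
    using C4_two_blocks[OF assms(2) outer outer inner] C3D[OF assms(1) outer] m sums
    by (simp add: pair_eq_two_point eq_diff_eq')
  also have "\<dots> = (scaled_two_point I \<alpha> \<beta> + scaled_two_point I \<alpha>' \<beta>') / M"
    by (simp add: scaled_two_point_def m_def m'_def add_divide_distrib)
  finally show ?thesis .
qed

lemma scaled_two_point_exchange:
  assumes "C2 I" "C3 I" "C4 I" and gt: "1 < \<alpha>" "1 < \<beta>" "1 < \<alpha>'" "1 < \<beta>'"
  shows "scaled_two_point I \<alpha> \<beta> + scaled_two_point I \<alpha>' \<beta>' = scaled_two_point I \<alpha> \<beta>' + scaled_two_point I \<alpha>' \<beta>"
proof -
  define M where "M = \<alpha> + \<beta> + \<alpha>' + \<beta>' - 2"
  have "0 < M" using gt by (simp add: M_def)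
  have "\<alpha> / M + (\<beta> - 1) / M + \<alpha>' / M + (\<beta>' - 1) / M = 1"
    "(\<alpha> - 1) / M + \<beta> / M + (\<alpha>' - 1) / M + \<beta>' / M = 1"
    unfolding add_divide_distrib[symmetric] using \<open>0 < M\<close> by (simp_all add: M_def)
  then have "[\<alpha> / M, (\<beta> - 1) / M, \<alpha>' / M, (\<beta>' - 1) / M] \<in> osimplex 4"
    "[(\<alpha> - 1) / M, \<beta> / M, (\<alpha>' - 1) / M, \<beta>' / M] \<in> osimplex 4"
    using gt \<open>0 < M\<close> by (simp_all add: osimplex_4_iff)
  from C2D[OF assms(1) this permutes_swap_id[of 1 "{..<4}" 3]]
  have "(scaled_two_point I \<alpha> \<beta>' + scaled_two_point I \<alpha>' \<beta>) / M = (scaled_two_point I \<alpha> \<beta> + scaled_two_point I \<alpha>' \<beta>') / M"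
    using C4_four_point[OF assms(2,3) gt M_def] C4_four_point[OF assms(2,3) gt(1,4,3,2)]
    by (simp add: permute_vec_transpose M_def add.commute add.left_commute)
  then show ?thesis using \<open>0 < M\<close> by simp
qed

lemma scaled_two_point_split:
  assumes "C2 I" "C3 I" "C4 I" "1 < \<alpha>" "1 < \<beta>"
  shows "scaled_two_point I \<alpha> \<beta> =
    (scaled_two_point I \<alpha> 2 - scaled_two_point I 2 2 / 2) + (scaled_two_point I 2 \<beta> - scaled_two_point I 2 2 / 2)"
  using scaled_two_point_exchange[OF assms, of 2 2] by simp

text \<open>With \<open>\<alpha> = x / (x - y)\<close> and \<open>\<beta> = (1 - y) / (x - y)\<close>, the two halves of
  \<open>scaled_two_point_split\<close> become \<open>summand I x y\<close> and \<open>summand I (1 - x) (1 - y)\<close>.\<close>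

definition summand :: "(real list \<Rightarrow> real list \<Rightarrow> real) \<Rightarrow> real \<Rightarrow> real \<Rightarrow> real" where
  "summand I \<pi> \<rho> =
    (if \<rho> < \<pi> then (\<pi> - \<rho>) * (scaled_two_point I (\<pi> / (\<pi> - \<rho>)) 2 - scaled_two_point I 2 2 / 2)
     else if \<pi> < \<rho> then (\<rho> - \<pi>) * (scaled_two_point I 2 (\<rho> / (\<rho> - \<pi>)) - scaled_two_point I 2 2 / 2)
     else 0)"

lemma summand_diag: "summand I x x = 0"
  by (simp add: summand_def)

lemma summand_homogeneous:
  assumes "0 < c"
  shows "summand I (c * \<pi>) (c * \<rho>) = c * summand I \<pi> \<rho>"
proof -
  have "c * \<pi> - c * \<rho> = c * (\<pi> - \<rho>)" "c * \<rho> - c * \<pi> = c * (\<rho> - \<pi>)"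
    by (simp_all add: algebra_simps)
  moreover have "c * \<pi> / (c * (\<pi> - \<rho>)) = \<pi> / (\<pi> - \<rho>)" "c * \<rho> / (c * (\<rho> - \<pi>)) = \<rho> / (\<rho> - \<pi>)"
    using assms by simp_all
  ultimately show ?thesis
    using assms unfolding summand_def by (auto simp: mult_less_cancel_left_pos)
qed

lemma summand_split:
  assumes "0 < l" "l < 1"
  shows "summand I (l * a) (l * b) + summand I ((1 - l) * a) ((1 - l) * b) = summand I a b"
  using summand_homogeneous[of l I a b] summand_homogeneous[of "1 - l" I a b] assms
  by (simp add: algebra_simps)

lemma two_point_eq_summands_gt:
  assumes C: "C2 I" "C3 I" "C4 I" and xy: "0 < y" "y < x" "x < 1"
  shows "two_point I x y = summand I x y + summand I (1 - x) (1 - y)"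
proof -
  define d where "d = x - y"
  define \<alpha> where "\<alpha> = x / d"
  define \<beta> where "\<beta> = (1 - y) / d"
  have "0 < d" using xy by (simp add: d_def)
  have gt: "1 < \<alpha>" "1 < \<beta>" using xy \<open>0 < d\<close> by (simp_all add: \<alpha>_def \<beta>_def d_def field_simps)
  have "\<alpha> + \<beta> - 1 = (x + (1 - y) - d) / d" using \<open>0 < d\<close> by (simp add: \<alpha>_def \<beta>_def field_simps)
  then have total: "\<alpha> + \<beta> - 1 = 1 / d" by (simp add: d_def)
  have "summand I x y = d * (scaled_two_point I \<alpha> 2 - scaled_two_point I 2 2 / 2)"
    using xy by (simp add: summand_def d_def \<alpha>_def)
  moreover have "(1 - y) - (1 - x) = d" by (simp add: d_def)
  then have "summand I (1 - x) (1 - y) = d * (scaled_two_point I 2 \<beta> - scaled_two_point I 2 2 / 2)"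
    using xy by (simp add: summand_def \<beta>_def)
  ultimately have "summand I x y + summand I (1 - x) (1 - y) =
      d * ((scaled_two_point I \<alpha> 2 - scaled_two_point I 2 2 / 2) + (scaled_two_point I 2 \<beta> - scaled_two_point I 2 2 / 2))"
    by (simp add: algebra_simps)
  also have "\<dots> = d * scaled_two_point I \<alpha> \<beta>"
    using scaled_two_point_split[OF C gt] by simp
  also have "\<dots> = two_point I x y"
  proof -
    have "\<alpha> / (\<alpha> + \<beta> - 1) = x" "(\<alpha> - 1) / (\<alpha> + \<beta> - 1) = y"
      using \<open>0 < d\<close> unfolding total by (simp_all add: \<alpha>_def d_def field_simps)
    then show ?thesis using \<open>0 < d\<close> by (simp add: scaled_two_point_def total)
  qed
  finally show ?thesis by simp
qed

lemma two_point_eq_summands: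
  assumes C: "C2 I" "C3 I" "C4 I" and xy: "0 < x" "x < 1" "0 < y" "y < 1"
  shows "two_point I x y = summand I x y + summand I (1 - x) (1 - y)"
proof -
  consider "y < x" | "x < y" | "x = y" by linarith
  then show ?thesis
  proof cases
    case 1
    then show ?thesis using two_point_eq_summands_gt[OF C] xy by simp
  next
    case 2
    then have "two_point I (1 - x) (1 - y) = summand I (1 - x) (1 - y) + summand I x y"
      using two_point_eq_summands_gt[OF C, of "1 - y" "1 - x"] xy by simp
    then show ?thesis using two_point_swap[OF C(1) xy] by simp
  next
    case 3
    then show ?thesis using two_point_diag[OF C(2) xy(1,2)] by (simp add: summand_diag)
  qed
qed

lemma two_point_rescaled:
  assumes C: "C2 I" "C3 I" "C4 I" and pos: "0 < a" "0 < b" "0 < a'" "0 < b'"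
    and s: "a + b = s" "a' + b' = s"
  shows "s * two_point I (a / s) (a' / s) = summand I a a' + summand I b b'"
proof -
  have "0 < s" using pos s by simp
  have "0 < a / s" "a / s < 1" "0 < a' / s" "a' / s < 1"
    using pos s \<open>0 < s\<close> by (auto simp: field_simps)
  moreover have "1 - a / s = b / s" "1 - a' / s = b' / s"
    using s \<open>0 < s\<close> by (auto simp: field_simps)
  ultimately have "two_point I (a / s) (a' / s) = summand I (a / s) (a' / s) + summand I (b / s) (b' / s)"
    using two_point_eq_summands[OF C] by simp
  then show ?thesis
    using summand_homogeneous[OF \<open>0 < s\<close>, of I "a / s" "a' / s"]
      summand_homogeneous[OF \<open>0 < s\<close>, of I "b / s" "b' / s"] \<open>0 < s\<close>
    by (simp add: algebra_simps)
qed

lemma C4_two_blocks_same_outer: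
  assumes "C3 I" "C4 I" "[s, t] \<in> osimplex 2"
    and "\<mu>1 \<in> osimplex k1" "\<nu>1 \<in> osimplex k1" "\<mu>2 \<in> osimplex k2" "\<nu>2 \<in> osimplex k2"
  shows "I (map ((*) s) \<mu>1 @ map ((*) t) \<mu>2) (map ((*) s) \<nu>1 @ map ((*) t) \<nu>2) = s * I \<mu>1 \<nu>1 + t * I \<mu>2 \<nu>2"
  using C4_two_blocks[OF assms(2) assms(3) assms(3-)] C3D[OF assms(1,3)] by simp

lemma two_plus_two_eq_summands:
  assumes C: "C2 I" "C3 I" "C4 I" and outer: "[s, t] \<in> osimplex 2"
    and pos: "0 < a" "0 < b" "0 < a'" "0 < b'" "0 < c" "0 < d" "0 < c'" "0 < d'"
    and s: "a + b = s" "a' + b' = s" and t: "c + d = t" "c' + d' = t"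
  shows "I [a, b, c, d] [a', b', c', d'] =
    summand I a a' + summand I b b' + summand I c c' + summand I d d'"
proof -
  have "0 < s" "0 < t" using pos s t by auto
  have sums: "a / s + b / s = 1" "a' / s + b' / s = 1" "c / t + d / t = 1" "c' / t + d' / t = 1"
    using \<open>0 < s\<close> \<open>0 < t\<close> s t unfolding add_divide_distrib[symmetric] by simp_all
  then have "[a / s, b / s] \<in> osimplex 2" "[a' / s, b' / s] \<in> osimplex 2"
    "[c / t, d / t] \<in> osimplex 2" "[c' / t, d' / t] \<in> osimplex 2"
    using pos \<open>0 < s\<close> \<open>0 < t\<close> by (simp_all add: osimplex_2_iff)
  from C4_two_blocks_same_outer[OF C(2,3) outer this]
  have "I [a, b, c, d] [a', b', c', d'] =
      s * I [a / s, b / s] [a' / s, b' / s] + t * I [c / t, d / t] [c' / t, d' / t]"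
    using \<open>0 < s\<close> \<open>0 < t\<close> by simp
  also have "\<dots> = s * two_point I (a / s) (a' / s) + t * two_point I (c / t) (c' / t)"
    using sums by (simp add: pair_eq_two_point eq_diff_eq add.commute)
  finally show ?thesis
    using two_point_rescaled[OF C pos(1-4) s] two_point_rescaled[OF C pos(5-8) t] by simp
qed

lemma three_point_eq_summands_last_eq:
  assumes C: "C2 I" "C3 I" "C4 I" and pos: "0 < a" "0 < b" "0 < a'" "0 < b'" "0 < c"
    and sums: "a + b + c = 1" "a' + b' + c = 1"
  shows "I [a, b, c] [a', b', c] = summand I a a' + summand I b b' + summand I c c"
proof -
  define s where "s = a + b"
  have "0 < s" "a' + b' = s" using pos sums by (simp_all add: s_def)
  have outer: "[s, c] \<in> osimplex 2" using pos sums by (simp add: osimplex_2_iff s_def)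
  have inner: "a / s + b / s = 1" "a' / s + b' / s = 1"
    using \<open>0 < s\<close> \<open>a' + b' = s\<close> unfolding add_divide_distrib[symmetric] by (simp_all add: s_def)
  then have "[a / s, b / s] \<in> osimplex 2" "[a' / s, b' / s] \<in> osimplex 2"
    using pos \<open>0 < s\<close> by (simp_all add: osimplex_2_iff)
  from C4_two_blocks_same_outer[OF C(2,3) outer this osimplex_1 osimplex_1]
  have "I [a, b, c] [a', b', c] = s * I [a / s, b / s] [a' / s, b' / s]"
    using C3D[OF C(2) osimplex_1] \<open>0 < s\<close> by simp
  also have "\<dots> = s * two_point I (a / s) (a' / s)"
    using inner by (simp add: pair_eq_two_point eq_diff_eq add.commute)
  finally show ?thesis
    using two_point_rescaled[OF C pos(1-4)] \<open>a' + b' = s\<close> by (simp add: s_def summand_diag)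
qed

lemma balancing_split:
  fixes P1 P2 P3 Q1 Q2 Q3 :: real
  assumes sums: "P1 + P2 + P3 = Q1 + Q2 + Q3" and sign: "0 < (P1 - Q1) * (P2 - Q2)"
  obtains l where "0 < l" "l < 1" "P1 + P3 * l = Q1 + Q3 * l" "P2 + P3 * (1 - l) = Q2 + Q3 * (1 - l)"
proof -
  define l where "l = (P1 - Q1) / ((P1 - Q1) + (P2 - Q2))"
  have "(0 < P1 - Q1 \<and> 0 < P2 - Q2) \<or> (P1 - Q1 < 0 \<and> P2 - Q2 < 0)"
    using sign by (simp add: zero_less_mult_iff)
  then have l: "0 < l" "l < 1" "l * ((P1 - Q1) + (P2 - Q2)) = P1 - Q1"
    unfolding l_def by (auto simp: divide_less_eq zero_less_divide_iff)
  have "(P1 - Q1) + (P2 - Q2) = Q3 - P3" using sums by linarith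
  with l(3) have "l * (Q3 - P3) = P1 - Q1" by simp
  then have "Q3 * l - P3 * l = P1 - Q1" by (simp add: right_diff_distrib mult.commute)
  moreover have "P3 * (1 - l) = P3 - P3 * l" "Q3 * (1 - l) = Q3 - Q3 * l"
    by (simp_all add: right_diff_distrib)
  ultimately have "P1 + P3 * l = Q1 + Q3 * l" "P2 + P3 * (1 - l) = Q2 + Q3 * (1 - l)"
    using sums by linarith+
  with l(1,2) show thesis by (rule that)
qed

text \<open>Splitting the third coordinate in the ratio \<open>l : 1 - l\<close> of \<open>balancing_split\<close> reduces the
  claim to \<open>two_plus_two_eq_summands\<close>.\<close>

lemma three_point_eq_summands_same_sign:
  assumes C: "C2 I" "C3 I" "C4 I" and pq: "[P1, P2, P3] \<in> osimplex 3" "[Q1, Q2, Q3] \<in> osimplex 3"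
    and sign: "0 < (P1 - Q1) * (P2 - Q2)"
  shows "I [P1, P2, P3] [Q1, Q2, Q3] = summand I P1 Q1 + summand I P2 Q2 + summand I P3 Q3"
proof -
  have pos: "0 < P1" "0 < P2" "0 < P3" "0 < Q1" "0 < Q2" "0 < Q3"
    and sums: "P1 + P2 + P3 = 1" "Q1 + Q2 + Q3 = 1"
    using pq by (auto simp: osimplex_3_iff)
  from sums have "P1 + P2 + P3 = Q1 + Q2 + Q3" by simp
  from this sign obtain l where l: "0 < l" "l < 1"
    and balance: "P1 + P3 * l = Q1 + Q3 * l" "P2 + P3 * (1 - l) = Q2 + Q3 * (1 - l)"
    by (rule balancing_split)
  have pos': "0 < P3 * l" "0 < P3 * (1 - l)" "0 < Q3 * l" "0 < Q3 * (1 - l)"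
    using pos l by simp_all
  have "P3 * (1 - l) = P3 - P3 * l" "Q3 * (1 - l) = Q3 - Q3 * l"
    by (simp_all add: right_diff_distrib)
  then have "P1 + P2 + P3 * l + P3 * (1 - l) = 1" "Q1 + Q2 + Q3 * l + Q3 * (1 - l) = 1"
    "P1 + P3 * l + (P2 + P3 * (1 - l)) = 1"
    using sums by linarith+
  then have refined: "[P1, P2, P3 * l, P3 * (1 - l)] \<in> osimplex 4" "[Q1, Q2, Q3 * l, Q3 * (1 - l)] \<in> osimplex 4"
    and outer: "[P1 + P3 * l, P2 + P3 * (1 - l)] \<in> osimplex 2"
    using pos pos' by (simp_all add: osimplex_4_iff osimplex_2_iff add_pos_pos)
  have split: "[l, 1 - l] \<in> osimplex 2" using l by (simp add: osimplex_2_iff)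
  have "I [P1, P2, P3 * l, P3 * (1 - l)] [Q1, Q2, Q3 * l, Q3 * (1 - l)] = I [P1, P2, P3] [Q1, Q2, Q3]"
    using C4_three_blocks[OF C(3) pq osimplex_1 osimplex_1 osimplex_1 osimplex_1 split split]
    by (simp add: C3D[OF C(2) osimplex_1] C3D[OF C(2) split])
  moreover from outer have "I [P1, P3 * l, P2, P3 * (1 - l)] [Q1, Q3 * l, Q2, Q3 * (1 - l)] =
      summand I P1 Q1 + summand I (P3 * l) (Q3 * l) + summand I P2 Q2 + summand I (P3 * (1 - l)) (Q3 * (1 - l))"
    using two_plus_two_eq_summands[OF C _ pos(1) pos'(1) pos(4) pos'(3) pos(2) pos'(2) pos(5) pos'(4)] balance
    by simp
  ultimately show ?thesis
    using C2D[OF C(1) refined permutes_swap_id[of 1 "{..<4}" 2]] summand_split[OF l, of I P3 Q3]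
    by (simp add: permute_vec_transpose mult.commute)
qed

lemma three_point_eq_summands:
  assumes C: "C2 I" "C3 I" "C4 I" and pq: "[P1, P2, P3] \<in> osimplex 3" "[Q1, Q2, Q3] \<in> osimplex 3"
  shows "I [P1, P2, P3] [Q1, Q2, Q3] = summand I P1 Q1 + summand I P2 Q2 + summand I P3 Q3"
proof -
  have pos: "0 < P1" "0 < P2" "0 < P3" "0 < Q1" "0 < Q2" "0 < Q3"
    and sums: "P1 + P2 + P3 = 1" "Q1 + Q2 + Q3 = 1"
    using pq by (auto simp: osimplex_3_iff)
  have pq': "[P1, P3, P2] \<in> osimplex 3" "[Q1, Q3, Q2] \<in> osimplex 3"
    and pq'': "[P3, P2, P1] \<in> osimplex 3" "[Q3, Q2, Q1] \<in> osimplex 3"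
    using pos sums by (auto simp: osimplex_3_iff algebra_simps)
  have swap23: "I [P1, P3, P2] [Q1, Q3, Q2] = I [P1, P2, P3] [Q1, Q2, Q3]"
    using C2D[OF C(1) pq permutes_swap_id[of 1 "{..<3}" 2]] by (simp add: permute_vec_transpose)
  have swap13: "I [P3, P2, P1] [Q3, Q2, Q1] = I [P1, P2, P3] [Q1, Q2, Q3]"
    using C2D[OF C(1) pq permutes_swap_id[of 0 "{..<3}" 2]] by (simp add: permute_vec_transpose)
  \<comment> \<open>The differences \<open>Pi - Qi\<close> sum to zero, so one vanishes or two of them have the same sign.\<close>
  have "P3 = Q3 \<or> P1 = Q1 \<or> P2 = Q2 \<or> 0 < (P1 - Q1) * (P2 - Q2) \<or> 0 < (P1 - Q1) * (P3 - Q3) \<or>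
      0 < (P3 - Q3) * (P2 - Q2)"
    using sums by (auto simp: zero_less_mult_iff)
  then show ?thesis
  proof (elim disjE)
    assume "P3 = Q3"
    then show ?thesis using three_point_eq_summands_last_eq[OF C pos(1,2,4,5,3)] sums by simp
  next
    assume "P1 = Q1"
    then show ?thesis
      using three_point_eq_summands_last_eq[OF C pos(3,2,6,5,1)] sums swap13 by (simp add: algebra_simps)
  next
    assume "P2 = Q2"
    then show ?thesis
      using three_point_eq_summands_last_eq[OF C pos(1,3,4,6,2)] sums swap23 by (simp add: algebra_simps)
  next
    assume "0 < (P1 - Q1) * (P2 - Q2)"
    then show ?thesis using three_point_eq_summands_same_sign[OF C pq] by simp
  next
    assume "0 < (P1 - Q1) * (P3 - Q3)"
    then show ?thesis
      using three_point_eq_summands_same_sign[OF C pq'] swap23 by (simp add: algebra_simps)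
  next
    assume "0 < (P3 - Q3) * (P2 - Q2)"
    then show ?thesis
      using three_point_eq_summands_same_sign[OF C pq''] swap13 by (simp add: algebra_simps)
  qed
qed

definition psi :: "(real list \<Rightarrow> real list \<Rightarrow> real) \<Rightarrow> real \<Rightarrow> real" where
  "psi I r = summand I r 1 / r"

lemma psi_one: "psi I 1 = 0"
  by (simp add: psi_def summand_diag)

lemma summand_eq_psi:
  assumes "0 < \<pi>" "0 < \<rho>"
  shows "summand I \<pi> \<rho> = \<pi> * psi I (\<pi> / \<rho>)"
  using summand_homogeneous[OF assms(2), of I "\<pi> / \<rho>" 1] assms by (simp add: psi_def)

lemma summand_refinement:
  assumes C: "C2 I" "C3 I" "C4 I" and xy: "0 < x" "x < 1" "0 < y" "y < 1"
    and st: "0 < s" "s < 1" "0 < t" "t < 1"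
  shows "summand I (x * s) (y * t) + summand I (x * (1 - s)) (y * (1 - t)) =
    summand I x y + x * (summand I s t + summand I (1 - s) (1 - t))"
proof -
  have "[x, 1 - x] \<in> osimplex 2" "[y, 1 - y] \<in> osimplex 2" "[s, 1 - s] \<in> osimplex 2" "[t, 1 - t] \<in> osimplex 2"
    using xy st by (simp_all add: osimplex_2_iff)
  from C4_two_blocks[OF C(3) this osimplex_1 osimplex_1]
  have "I [x * s, x * (1 - s), 1 - x] [y * t, y * (1 - t), 1 - y] = two_point I x y + x * two_point I s t"
    by (simp add: C3D[OF C(2) osimplex_1] two_point_def)
  moreover have "[x * s, x * (1 - s), 1 - x] \<in> osimplex 3" "[y * t, y * (1 - t), 1 - y] \<in> osimplex 3"
    using xy st by (simp_all add: osimplex_3_iff algebra_simps)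
  ultimately show ?thesis
    using three_point_eq_summands[OF C] two_point_eq_summands[OF C xy] two_point_eq_summands[OF C st]
    by (simp add: algebra_simps)
qed

definition psi_defect :: "(real list \<Rightarrow> real list \<Rightarrow> real) \<Rightarrow> real \<Rightarrow> real \<Rightarrow> real" where
  "psi_defect I a r = psi I (a * r) - psi I a - psi I r"

lemma psi_defect_balance:
  assumes C: "C2 I" "C3 I" "C4 I" and "0 < a" and st: "0 < s" "s < 1" "0 < t" "t < 1"
  shows "s * psi_defect I a (s / t) + (1 - s) * psi_defect I a ((1 - s) / (1 - t)) = 0"
proof -
  define x where "x = a / (1 + a)"
  define y where "y = 1 / (1 + a)"
  have xy: "0 < x" "x < 1" "0 < y" "y < 1" and "x / y = a"
    using \<open>0 < a\<close> by (simp_all add: x_def y_def)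
  then have "x * s / (y * t) = a * (s / t)" "x * (1 - s) / (y * (1 - t)) = a * ((1 - s) / (1 - t))"
    using st by (simp_all add: field_simps)
  then have "x * (s * psi I (a * (s / t)) + (1 - s) * psi I (a * ((1 - s) / (1 - t)))) =
      x * (psi I a + s * psi I (s / t) + (1 - s) * psi I ((1 - s) / (1 - t)))"
    using summand_refinement[OF C xy st] xy st \<open>x / y = a\<close>
    by (simp add: summand_eq_psi algebra_simps)
  then have "s * psi I (a * (s / t)) + (1 - s) * psi I (a * ((1 - s) / (1 - t))) =
      psi I a + s * psi I (s / t) + (1 - s) * psi I ((1 - s) / (1 - t))"
    using \<open>0 < x\<close> by (simp only: mult_cancel_left) simp
  then show ?thesis by (simp add: psi_defect_def algebra_simps)
qed

lemma psi_defect_balance_ratios: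
  assumes C: "C2 I" "C3 I" "C4 I" and "0 < a" and r: "1 < r1" "0 < r2" "r2 < 1"
  shows "r1 * (1 - r2) * psi_defect I a r1 + r2 * (r1 - 1) * psi_defect I a r2 = 0"
proof -
  define t where "t = (1 - r2) / (r1 - r2)"
  define s where "s = r1 * t"
  have "0 < r1 - r2" using r by simp
  have st: "0 < s" "s < 1" "0 < t" "t < 1" using r \<open>0 < r1 - r2\<close>
    by (auto simp: s_def t_def field_simps)
  have s: "(r1 - r2) * s = r1 * (1 - r2)" "(r1 - r2) * (1 - s) = r2 * (r1 - 1)"
    and t: "(r1 - r2) * (1 - t) = r1 - 1"
    using \<open>0 < r1 - r2\<close> by (simp_all add: s_def t_def field_simps)
  have "s / t = r1" using st by (simp add: s_def)
  moreover have "1 - s = r2 * (r1 - 1) / (r1 - r2)" "1 - t = (r1 - 1) / (r1 - r2)"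
    using s(2) t \<open>0 < r1 - r2\<close> by (simp_all add: eq_divide_eq mult.commute)
  then have "(1 - s) / (1 - t) = r2" using r by simp
  ultimately have "s * psi_defect I a r1 + (1 - s) * psi_defect I a r2 = 0"
    using psi_defect_balance[OF C \<open>0 < a\<close> st] by simp
  then have "((r1 - r2) * s) * psi_defect I a r1 + ((r1 - r2) * (1 - s)) * psi_defect I a r2 = 0"
    by (simp add: mult.assoc flip: distrib_left)
  then show ?thesis unfolding s .
qed

lemma psi_defect_eq:
  assumes C: "C2 I" "C3 I" "C4 I" and "0 < a" "0 < r"
  shows "psi_defect I a r = 2 * psi_defect I a 2 * (1 - 1 / r)"
proof -
  have half: "psi_defect I a (1 / 2) = - 2 * psi_defect I a 2"
    using psi_defect_balance_ratios[OF C \<open>0 < a\<close>, of 2 "1 / 2"] by simp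
  consider "1 < r" | "r < 1" | "r = 1" by linarith
  then show ?thesis
  proof cases
    case 1
    then show ?thesis
      using psi_defect_balance_ratios[OF C \<open>0 < a\<close> 1, of "1 / 2"] half by (simp add: field_simps)
  next
    case 2
    then show ?thesis
      using psi_defect_balance_ratios[OF C \<open>0 < a\<close>, of 2 r] \<open>0 < r\<close> by (simp add: field_simps)
  next
    case 3
    then show ?thesis by (simp add: psi_defect_def psi_one)
  qed
qed

text \<open>\<open>psi\<close> is logarithmic up to the correction \<open>\<beta> (1 - 1/r)\<close>, whose contributions to
  \<open>two_point I x y\<close> cancel.\<close>

lemma two_point_log_representation:
  assumes C: "C2 I" "C3 I" "C4 I"
  obtains L where "\<And>a b. 0 < a \<Longrightarrow> 0 < b \<Longrightarrow> L (a * b) = L a + L b"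
    and "\<And>x y. 0 < x \<Longrightarrow> x < 1 \<Longrightarrow> 0 < y \<Longrightarrow> y < 1 \<Longrightarrow>
      two_point I x y = x * L (x / y) + (1 - x) * L ((1 - x) / (1 - y))"
proof -
  define \<beta> where "\<beta> = 4 * psi_defect I 2 2"
  define L where "L r = psi I r + \<beta> * (1 - 1 / r)" for r
  have defect: "psi_defect I a r = \<beta> * (1 - 1 / a) * (1 - 1 / r)" if "0 < a" "0 < r" for a r
  proof -
    have "psi_defect I a 2 = psi_defect I 2 a" by (simp add: psi_defect_def mult.commute)
    also have "\<dots> = 2 * psi_defect I 2 2 * (1 - 1 / a)" using psi_defect_eq[OF C, of 2 a] that by simp
    finally show ?thesis using psi_defect_eq[OF C that] by (simp add: \<beta>_def)
  qed
  have "L (a * b) = L a + L b" if "0 < a" "0 < b" for a b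
    using defect[OF that] that by (simp add: L_def psi_defect_def field_simps)
  moreover have "two_point I x y = x * L (x / y) + (1 - x) * L ((1 - x) / (1 - y))"
    if "0 < x" "x < 1" "0 < y" "y < 1" for x y
  proof -
    have "x * L (x / y) + (1 - x) * L ((1 - x) / (1 - y)) = x * psi I (x / y) + (1 - x) * psi I ((1 - x) / (1 - y)) +
        \<beta> * (x * (1 - 1 / (x / y)) + (1 - x) * (1 - 1 / ((1 - x) / (1 - y))))"
      by (simp add: L_def algebra_simps)
    also have "x * (1 - 1 / (x / y)) + (1 - x) * (1 - 1 / ((1 - x) / (1 - y))) = 0"
      using that by (simp add: field_simps)
    finally show ?thesis
      using two_point_eq_summands[OF C that] that by (simp add: summand_eq_psi)
  qed
  ultimately show thesis by (rule that)
qed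

section \<open>Measurable logarithmic functions\<close>

lemma additive_of_nat_mult:
  fixes A :: "real \<Rightarrow> real"
  assumes "Modules.additive A"
  shows "A (real n * t) = real n * A t"
  using Modules.additive.sum[OF assms, of "\<lambda>_. t" "{..<n}"] by simp

lemma additive_of_int_mult:
  fixes A :: "real \<Rightarrow> real"
  assumes "Modules.additive A"
  shows "A (real_of_int j * t) = real_of_int j * A t"
proof (cases "0 \<le> j")
  case True
  then show ?thesis using additive_of_nat_mult[OF assms, of "nat j" t] by simp
next
  case False
  then have "real_of_int j * t = - (real (nat (- j)) * t)" by simp
  then show ?thesis
    using additive_of_nat_mult[OF assms, of "nat (- j)" t] Modules.additive.minus[OF assms] False by simp
qed

lemma additive_bounded_eq_0:
  fixes A :: "real \<Rightarrow> real"
  assumes "Modules.additive A" and bounded: "\<And>t. \<bar>A t\<bar> \<le> B"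
  shows "A t = 0"
proof (rule ccontr)
  assume "A t \<noteq> 0"
  obtain n :: nat where "B / \<bar>A t\<bar> < n" using reals_Archimedean2 by blast
  then have "B < \<bar>A (real n * t)\<bar>"
    using \<open>A t \<noteq> 0\<close> by (simp add: additive_of_nat_mult[OF assms(1)] abs_mult pos_divide_less_eq)
  with bounded show False by (meson not_le)
qed

lemma additive_bounded_near_0_imp_linear:
  fixes A :: "real \<Rightarrow> real"
  assumes "Modules.additive A" "0 < \<eta>" and bounded: "\<And>t. 0 \<le> t \<Longrightarrow> t < \<eta> \<Longrightarrow> \<bar>A t\<bar> \<le> B"
  shows "A t = t * A 1"
proof -
  define D where "D t = A t - t * A 1" for t
  have D: "Modules.additive D"
    using assms(1) by (simp add: Modules.additive_def D_def algebra_simps)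
  obtain m :: nat where m: "1 / \<eta> < m" using reals_Archimedean2 by blast
  then have "0 < real m" using \<open>0 < \<eta>\<close> by (smt (verit) divide_pos_pos)
  have "\<bar>D s\<bar> \<le> m * (B + \<eta> * \<bar>A 1\<bar>)" if "0 \<le> s" "s < 1" for s
  proof -
    have "s / m < \<eta>"
      using that m \<open>0 < \<eta>\<close> \<open>0 < real m\<close> by (simp add: divide_less_eq field_simps)
    then have "\<bar>A (s / m)\<bar> \<le> B" using that bounded \<open>0 < real m\<close> by simp
    moreover have "\<bar>s / m\<bar> * \<bar>A 1\<bar> \<le> \<eta> * \<bar>A 1\<bar>"
      using \<open>s / m < \<eta>\<close> that \<open>0 < real m\<close> by (intro mult_right_mono) auto
    ultimately have "\<bar>D (s / m)\<bar> \<le> B + \<eta> * \<bar>A 1\<bar>" unfolding D_def abs_mult[symmetric] by linarith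
    moreover have "D s = m * D (s / m)"
      using additive_of_nat_mult[OF D, of m "s / m"] \<open>0 < real m\<close> by simp
    ultimately show ?thesis using \<open>0 < real m\<close> by (simp add: abs_mult)
  qed
  moreover have "D t = D (frac t)" for t
    using Modules.additive.add[OF D, of "frac t" "of_int \<lfloor>t\<rfloor>"] additive_of_int_mult[OF D, of "\<lfloor>t\<rfloor>" 1]
    by (simp add: D_def frac_def)
  ultimately have "\<bar>D t\<bar> \<le> m * (B + \<eta> * \<bar>A 1\<bar>)" for t
    by (metis frac_ge_0 frac_lt_1)
  then have "D t = 0" by (rule additive_bounded_eq_0[OF D])
  then show ?thesis by (simp add: D_def)
qed

lemma abs_less_if_cos_divide_nat_gt_half:
  assumes cos: "\<And>n::nat. 1 \<le> n \<Longrightarrow> 1 / 2 < cos (z / n)"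
  shows "\<bar>z\<bar> < pi / 3"
proof (rule ccontr)
  assume "\<not> \<bar>z\<bar> < pi / 3"
  then have q: "1 \<le> 3 * \<bar>z\<bar> / pi" by (simp add: field_simps)
  define n where "n = nat \<lfloor>3 * \<bar>z\<bar> / pi\<rfloor>"
  have "1 \<le> n" "real n \<le> 3 * \<bar>z\<bar> / pi" "3 * \<bar>z\<bar> / pi < real n + 1"
    using q unfolding n_def by linarith+
  \<comment> \<open>\<open>n\<close> is chosen so that \<open>\<bar>z\<bar> / n \<in> [pi/3, pi]\<close>, where \<open>cos \<le> 1/2\<close>.\<close>
  then have "pi * n \<le> 3 * \<bar>z\<bar>" "3 * \<bar>z\<bar> < pi * n + pi"
    by (simp_all add: field_simps)
  moreover have "pi \<le> pi * n" using \<open>1 \<le> n\<close> by simp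
  ultimately have "pi * n \<le> 3 * \<bar>z\<bar>" "\<bar>z\<bar> \<le> pi * n" using pi_gt_zero by linarith+
  then have "pi / 3 \<le> \<bar>z\<bar> / n" "\<bar>z\<bar> / n \<le> pi"
    using \<open>1 \<le> n\<close> by (simp_all add: field_simps)
  then have "cos (\<bar>z\<bar> / n) \<le> 1 / 2"
    using cos_mono_le_eq[of "\<bar>z\<bar> / n" "pi / 3"] by (simp add: cos_60)
  moreover have "cos (z / n) = cos (\<bar>z\<bar> / n)"
    by (cases "0 \<le> z") (simp_all add: minus_divide_left[symmetric])
  ultimately show False using cos[OF \<open>1 \<le> n\<close>] by simp
qed

lemma additive_linear_if_cos_gt_half:
  fixes A :: "real \<Rightarrow> real"
  assumes "Modules.additive A" "0 < \<epsilon>" "0 < \<eta>" and cos: "\<And>t. 0 \<le> t \<Longrightarrow> t < \<eta> \<Longrightarrow> 1 / 2 < cos (\<epsilon> * A t)"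
  shows "A t = t * A 1"
proof (rule additive_bounded_near_0_imp_linear[OF assms(1,3)])
  fix t assume t: "0 \<le> t" "t < \<eta>"
  have "1 / 2 < cos (\<epsilon> * A t / n)" if "1 \<le> n" for n :: nat
  proof -
    have "\<epsilon> * A t / n = \<epsilon> * A (t / n)"
      using additive_of_nat_mult[OF assms(1), of n "t / n"] that by simp
    moreover have "t / n \<le> t" using t that by (simp add: divide_le_eq mult_le_cancel_left1)
    ultimately show ?thesis using cos t by simp
  qed
  then have "\<bar>\<epsilon> * A t\<bar> < pi / 3" by (rule abs_less_if_cos_divide_nat_gt_half)
  then show "\<bar>A t\<bar> \<le> pi / (3 * \<epsilon>)"
    using \<open>0 < \<epsilon>\<close> by (simp add: abs_mult field_simps)
qed

lemma continuous_on_integral_stretch: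
  fixes f :: "real \<Rightarrow> real"
  assumes f: "f integrable_on {a * c..b * d}" and "0 < a" "a \<le> b" "0 < c"
  shows "continuous_on {c..d} (\<lambda>r. integral {a..b} (\<lambda>y. f (r * y)))"
proof -
  define P where "P x = integral {a * c..x} f" for x
  have P: "continuous_on {a * c..b * d} P"
    unfolding P_def by (rule indefinite_integral_continuous_1[OF f])
  have bounds: "a * c \<le> r * a" "r * a \<le> r * b" "r * b \<le> b * d" "a * c \<le> r * b" "r * a \<le> b * d"
    if "r \<in> {c..d}" for r
    using that assms(2-4) by (auto simp: mult.commute intro: mult_mono)
  have stretch: "integral {a..b} (\<lambda>y. f (r * y)) = (P (r * b) - P (r * a)) / r" if r: "r \<in> {c..d}" for r
  proof -
    have "0 < r" using r \<open>0 < c\<close> by simp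
    then have "(\<lambda>x. x / r) ` {r * a..r * b} = {a..b}" by simp
    then have "integral {a..b} (\<lambda>y. f (r * y)) = integral {r * a..r * b} f / r"
      using integral_stretch_real[of r "r * a" "r * b" f] \<open>0 < r\<close> by simp
    moreover have "integral {a * c..r * a} f + integral {r * a..r * b} f = integral {a * c..r * b} f"
      using bounds[OF r]
      by (intro Henstock_Kurzweil_Integration.integral_combine integrable_on_subinterval[OF f]) auto
    ultimately show ?thesis by (simp add: P_def)
  qed
  have "continuous_on {c..d} (\<lambda>r. P (r * b))" "continuous_on {c..d} (\<lambda>r. P (r * a))"
    by (rule continuous_on_compose2[OF P], rule continuous_intros, use bounds in auto)+
  then have "continuous_on {c..d} (\<lambda>r. (P (r * b) - P (r * a)) / r)"
    using \<open>0 < c\<close> by (intro continuous_on_divide continuous_on_diff continuous_on_id) auto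
  then show ?thesis by (rule continuous_on_eq) (simp add: stretch)
qed

lemma exists_integral_cos_mult_pos:
  fixes L :: "real \<Rightarrow> real"
  assumes meas: "L \<in> borel_measurable (lebesgue_on {a..b})" and "a < b"
  obtains \<epsilon> where "0 < \<epsilon>" "0 < integral {a..b} (\<lambda>y. cos (\<epsilon> * L y))"
proof -
  have "(\<lambda>k. integral {a..b} (\<lambda>y. cos (L y / Suc k))) \<longlonglongrightarrow> integral {a..b} (\<lambda>y. 1::real)"
  proof (rule dominated_convergence(2)[where h="\<lambda>_. 1"])
    show "(\<lambda>y. cos (L y / Suc k)) integrable_on {a..b}" for k
      by (rule measurable_bounded_by_integrable_imp_integrable[where g="\<lambda>_. 1"])
        (use meas in \<open>auto intro: borel_measurable_cos borel_measurable_divide\<close>)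
    show "(\<lambda>k. cos (L y / Suc k)) \<longlonglongrightarrow> 1" for y
      using tendsto_cos[OF LIMSEQ_Suc[OF lim_const_over_n[of "L y"]]] by simp
  qed auto
  moreover have "0 < integral {a..b} (\<lambda>y. 1::real)" using \<open>a < b\<close> by simp
  ultimately have "\<forall>\<^sub>F k in sequentially. 0 < integral {a..b} (\<lambda>y. cos (L y / Suc k))"
    by (rule order_tendstoD(1))
  then obtain k where "0 < integral {a..b} (\<lambda>y. cos (L y / Suc k))"
    by (meson eventually_sequentially order_refl)
  then show thesis by (intro that[of "1 / Suc k"]) (simp_all add: mult.commute)
qed

lemma continuous_on_cos_log_additive:
  fixes L :: "real \<Rightarrow> real"
  assumes mult: "\<And>a b. 0 < a \<Longrightarrow> 0 < b \<Longrightarrow> L (a * b) = L a + L b"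
    and meas: "L \<in> borel_measurable (lebesgue_on {1/8..3/4})"
    and nonzero: "integral {1/4..1/2} (\<lambda>y. cos (\<epsilon> * L y)) \<noteq> 0"
  shows "continuous_on {1/2..3/2} (\<lambda>r. cos (\<epsilon> * L r))"
proof -
  define C where "C = integral {1/4..1/2} (\<lambda>y. cos (\<epsilon> * L y))"
  define S where "S = integral {1/4..1/2} (\<lambda>y. sin (\<epsilon> * L y))"
  have integrable: "(\<lambda>y. cos (\<epsilon> * L y)) integrable_on {1/8..3/4}"
    "(\<lambda>y. sin (\<epsilon> * L y)) integrable_on {1/8..3/4}"
    by (rule measurable_bounded_by_integrable_imp_integrable[where g="\<lambda>_. 1"];
        use meas in \<open>auto intro: borel_measurable_cos borel_measurable_sin\<close>)+
  then have "(\<lambda>y. cos (\<epsilon> * L y)) integrable_on {1/4..1/2}" "(\<lambda>y. sin (\<epsilon> * L y)) integrable_on {1/4..1/2}"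
    by (auto elim: integrable_on_subinterval)
  note integrable' = this
  \<comment> \<open>Since \<open>L (r y) = L r + L y\<close>, stretching by \<open>r\<close> rotates the vector \<open>(C, S)\<close> by the angle \<open>\<epsilon> L r\<close>.\<close>
  have rotate: "integral {1/4..1/2} (\<lambda>y. cos (\<epsilon> * L (r * y))) = cos (\<epsilon> * L r) * C - sin (\<epsilon> * L r) * S"
    "integral {1/4..1/2} (\<lambda>y. sin (\<epsilon> * L (r * y))) = sin (\<epsilon> * L r) * C + cos (\<epsilon> * L r) * S"
    if "0 < r" for r
  proof -
    have "integral {1/4..1/2} (\<lambda>y. cos (\<epsilon> * L (r * y))) =
        integral {1/4..1/2} (\<lambda>y. cos (\<epsilon> * L r) * cos (\<epsilon> * L y) - sin (\<epsilon> * L r) * sin (\<epsilon> * L y))"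
      and "integral {1/4..1/2} (\<lambda>y. sin (\<epsilon> * L (r * y))) =
        integral {1/4..1/2} (\<lambda>y. sin (\<epsilon> * L r) * cos (\<epsilon> * L y) + cos (\<epsilon> * L r) * sin (\<epsilon> * L y))"
      using that by (auto simp: mult distrib_left cos_add sin_add intro!: integral_cong)
    then show "integral {1/4..1/2} (\<lambda>y. cos (\<epsilon> * L (r * y))) = cos (\<epsilon> * L r) * C - sin (\<epsilon> * L r) * S"
      and "integral {1/4..1/2} (\<lambda>y. sin (\<epsilon> * L (r * y))) = sin (\<epsilon> * L r) * C + cos (\<epsilon> * L r) * S"
      unfolding C_def S_def using integrable'
      by (simp_all add: integral_diff integral_add integrable_on_mult_right)
  qed
  have "0 < C\<^sup>2 + S\<^sup>2" using nonzero by (simp add: C_def[symmetric] add_pos_nonneg)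
  have combine: "C * integral {1/4..1/2} (\<lambda>y. cos (\<epsilon> * L (r * y))) +
      S * integral {1/4..1/2} (\<lambda>y. sin (\<epsilon> * L (r * y))) = cos (\<epsilon> * L r) * (C\<^sup>2 + S\<^sup>2)" if "0 < r" for r
    unfolding rotate[OF that] by (simp add: power2_eq_square algebra_simps)
  have cos_eq: "cos (\<epsilon> * L r) = (C * integral {1/4..1/2} (\<lambda>y. cos (\<epsilon> * L (r * y))) +
      S * integral {1/4..1/2} (\<lambda>y. sin (\<epsilon> * L (r * y)))) / (C\<^sup>2 + S\<^sup>2)" if "0 < r" for r
    by (intro eq_divide_imp) (use \<open>0 < C\<^sup>2 + S\<^sup>2\<close> combine[OF that] in auto)
  have "continuous_on {1/2..3/2} (\<lambda>r. (C * integral {1/4..1/2} (\<lambda>y. cos (\<epsilon> * L (r * y))) +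
      S * integral {1/4..1/2} (\<lambda>y. sin (\<epsilon> * L (r * y)))) / (C\<^sup>2 + S\<^sup>2))"
    using integrable \<open>0 < C\<^sup>2 + S\<^sup>2\<close>
    by (intro continuous_intros continuous_on_integral_stretch[where f="\<lambda>y. cos (\<epsilon> * L y)", simplified]
        continuous_on_integral_stretch[where f="\<lambda>y. sin (\<epsilon> * L y)", simplified]) auto
  then show ?thesis by (rule continuous_on_eq) (simp add: cos_eq)
qed

lemma log_additive_measurable_eq_c_ln:
  fixes L :: "real \<Rightarrow> real"
  assumes mult: "\<And>a b. 0 < a \<Longrightarrow> 0 < b \<Longrightarrow> L (a * b) = L a + L b"
    and meas: "L \<in> borel_measurable (lebesgue_on {0<..<1})"
  obtains c where "\<And>r. 0 < r \<Longrightarrow> L r = c * ln r"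
proof -
  have "L \<in> borel_measurable (lebesgue_on {1/8..3/4})" "L \<in> borel_measurable (lebesgue_on {1/4..1/2})"
    by (rule measurable_restrict_mono[OF meas]; auto)+
  moreover obtain \<epsilon> where "0 < \<epsilon>" and "0 < integral {1/4..1/2} (\<lambda>y. cos (\<epsilon> * L y))"
    using exists_integral_cos_mult_pos[OF calculation(2)] by auto
  ultimately have cont: "continuous_on {1/2..3/2} (\<lambda>r. cos (\<epsilon> * L r))"
    using continuous_on_cos_log_additive[OF mult] by simp
  have "1 \<in> {1/2..3/2::real}" "(0::real) < 1/2" by simp_all
  from cont[unfolded continuous_on_iff, rule_format, OF this]
  obtain d where "0 < d"
    and d: "\<And>r. r \<in> {1/2..3/2} \<Longrightarrow> dist r 1 < d \<Longrightarrow> dist (cos (\<epsilon> * L r)) (cos (\<epsilon> * L 1)) < 1/2"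
    by blast
  have "L 1 = 0" using mult[of 1 1] by simp
  define \<eta> where "\<eta> = ln (1 + min d (1/2))"
  have "0 < \<eta>" using \<open>0 < d\<close> by (simp add: \<eta>_def)
  have "Modules.additive (\<lambda>t. L (exp t))" using mult by (simp add: Modules.additive_def exp_add)
  moreover have "1/2 < cos (\<epsilon> * L (exp t))" if "0 \<le> t" "t < \<eta>" for t
  proof -
    have "1 \<le> exp t" using that by simp
    moreover have "exp t < 1 + min d (1/2)"
      using that \<open>0 < d\<close> exp_less_cancel_iff[of t \<eta>] by (simp add: \<eta>_def)
    ultimately have "exp t \<in> {1/2..3/2}" "dist (exp t) 1 < d"
      unfolding atLeastAtMost_iff dist_real_def abs_less_iff by linarith+
    then show ?thesis using d \<open>L 1 = 0\<close> by (auto simp: dist_real_def)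
  qed
  ultimately have "L (exp t) = t * L (exp 1)" for t
    using additive_linear_if_cos_gt_half[OF _ \<open>0 < \<epsilon>\<close> \<open>0 < \<eta>\<close>] by blast
  then show thesis by (metis that exp_ln mult.commute)
qed

section \<open>Measurability and the characterization\<close>

definition vec1 :: "real \<Rightarrow> nat \<Rightarrow> real" where
  "vec1 y = (\<lambda>i\<in>{..<1}. y)"

lemma measurable_vec1: "vec1 \<in> lborel \<rightarrow>\<^sub>M Pi\<^sub>M {..<1} (\<lambda>_. lborel)"
  unfolding vec1_def by (rule measurable_restrict) simp

lemma distr_vec1: "distr lborel (Pi\<^sub>M {..<1} (\<lambda>_. lborel)) vec1 = Pi\<^sub>M {..<1} (\<lambda>_. lborel)"
proof (rule product_sigma_finite.PiM_eqI)
  show "product_sigma_finite (\<lambda>_::nat. lborel :: real measure)"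
    by (simp add: product_sigma_finite_def lborel.sigma_finite_measure_axioms)
  fix A :: "nat \<Rightarrow> real set" assume A: "\<And>i. i \<in> {..<1} \<Longrightarrow> A i \<in> sets lborel"
  then have "Pi\<^sub>E {..<1} A \<in> sets (Pi\<^sub>M {..<1} (\<lambda>_. lborel))" by (intro sets_PiM_I_finite) auto
  then have "emeasure (distr lborel (Pi\<^sub>M {..<1} (\<lambda>_. lborel)) vec1) (Pi\<^sub>E {..<1} A) =
      emeasure lborel (vec1 -` Pi\<^sub>E {..<1} A \<inter> space lborel)"
    by (rule emeasure_distr[OF measurable_vec1])
  also have "vec1 -` Pi\<^sub>E {..<1} A \<inter> space lborel = A 0"
    by (auto simp: vec1_def PiE_def extensional_def Pi_def)
  finally show "emeasure (distr lborel (Pi\<^sub>M {..<1} (\<lambda>_. lborel)) vec1) (Pi\<^sub>E {..<1} A) =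
      (\<Prod>i\<in>{..<1}. emeasure lborel (A i))"
    by simp
qed simp_all

lemma measurable_vec1_lebesgue_m: "vec1 \<in> lebesgue \<rightarrow>\<^sub>M lebesgue_m 1"
proof -
  have "distr lebesgue (Pi\<^sub>M {..<1} (\<lambda>_. lborel)) vec1 = Pi\<^sub>M {..<1} (\<lambda>_. lborel)"
    using distr_completion[OF measurable_vec1] distr_vec1 by simp
  then show ?thesis
    unfolding lebesgue_m_def
    by (intro completion.measurable_completion2 measurable_completion[OF measurable_vec1]) simp
qed

lemma C1_two_point_measurable:
  assumes "C1 I" "p \<in> osimplex 2"
  shows "(\<lambda>y. I p [y, 1 - y]) \<in> borel_measurable (lebesgue_on {0<..<1})"
proof -
  have "\<forall>p\<in>osimplex (Suc 1). simplex_measurable 1 (\<lambda>q. I p q)"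
    using assms(1) unfolding C1_def by blast
  then have "(\<lambda>x. if x \<in> chart_dom 1 then I p (chart 1 x) else 0) \<in> borel_measurable (lebesgue_m 1)"
    using assms(2) unfolding simplex_measurable_def by (simp add: numeral_2_eq_2)
  from measurable_comp[OF measurable_vec1_lebesgue_m this]
  have meas: "(\<lambda>y. if vec1 y \<in> chart_dom 1 then I p (chart 1 (vec1 y)) else 0)
      \<in> borel_measurable (lebesgue_on {0<..<1})"
    by (simp add: comp_def measurable_restrict_space1)
  have "(if vec1 y \<in> chart_dom 1 then I p (chart 1 (vec1 y)) else 0) = I p [y, 1 - y]"
    if "y \<in> space (lebesgue_on {0<..<1})" for y
    using that by (simp add: vec1_def chart_dom_def chart_def)
  from measurable_cong[THEN iffD1, OF this meas] show ?thesis .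
qed

lemma two_point_eq_c_relent:
  assumes "C1 I" "C2 I" "C3 I" "C4 I"
  obtains c where "\<And>x y. 0 < x \<Longrightarrow> x < 1 \<Longrightarrow> 0 < y \<Longrightarrow> y < 1 \<Longrightarrow>
    two_point I x y = c * relent [x, 1 - x] [y, 1 - y]"
proof -
  obtain L where mult: "\<And>a b. 0 < a \<Longrightarrow> 0 < b \<Longrightarrow> L (a * b) = L a + L b"
    and rep: "\<And>x y. 0 < x \<Longrightarrow> x < 1 \<Longrightarrow> 0 < y \<Longrightarrow> y < 1 \<Longrightarrow>
      two_point I x y = x * L (x / y) + (1 - x) * L ((1 - x) / (1 - y))"
    using two_point_log_representation[OF assms(2-4)] by blast
  have quot: "L (a / b) = L a - L b" if "0 < a" "0 < b" for a b
    using mult[of "a / b" b] that by simp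
  \<comment> \<open>Weighting the representations at \<open>x = 1/2\<close> and \<open>x = 1/3\<close> cancels \<open>L (1 - y)\<close>.\<close>
  define K where "K = 4 * L (1/2) - L (1/3) - 2 * L (2/3)"
  have eq: "K - 4 * I [1/2, 1/2] [y, 1 - y] + 3 * I [1/3, 2/3] [y, 1 - y] = L y"
    if "y \<in> space (lebesgue_on {0<..<1})" for y
    using that rep[of "1/2" y] rep[of "1/3" y] quot[of "1/2" y] quot[of "1 - 1/2" "1 - y"]
      quot[of "1/3" y] quot[of "1 - 1/3" "1 - y"]
    by (simp add: K_def two_point_def field_simps)
  have m1: "(\<lambda>y. I [1/2, 1/2] [y, 1 - y]) \<in> borel_measurable (lebesgue_on {0<..<1})"
    by (rule C1_two_point_measurable[OF assms(1)]) (simp add: osimplex_2_iff)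
  have m2: "(\<lambda>y. I [1/3, 2/3] [y, 1 - y]) \<in> borel_measurable (lebesgue_on {0<..<1})"
    by (rule C1_two_point_measurable[OF assms(1)]) (simp add: osimplex_2_iff)
  have "(\<lambda>y. K - 4 * I [1/2, 1/2] [y, 1 - y] + 3 * I [1/3, 2/3] [y, 1 - y])
      \<in> borel_measurable (lebesgue_on {0<..<1})"
    using m1 m2 by measurable
  with eq have "L \<in> borel_measurable (lebesgue_on {0<..<1})"
    by (rule measurable_cong[THEN iffD1])
  then obtain c where "\<And>r. 0 < r \<Longrightarrow> L r = c * ln r"
    using log_additive_measurable_eq_c_ln[OF mult] by blast
  then show thesis
    using rep by (intro that[of c]) (simp add: relent_Cons relent_Nil algebra_simps)
qed

theorem mainTheorem7:
  fixes I :: "real list \<Rightarrow> real list \<Rightarrow> real"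
  shows "(C1 I \<and> C2 I \<and> C3 I \<and> C4 I) \<longleftrightarrow>
    (\<exists>c::real. \<forall>n p q. n \<ge> 1 \<longrightarrow> p \<in> osimplex n \<longrightarrow> q \<in> osimplex n \<longrightarrow>
        I p q = c * relent p q)"
proof
  assume "C1 I \<and> C2 I \<and> C3 I \<and> C4 I"
  then have C: "C1 I" "C2 I" "C3 I" "C4 I" by auto
  then obtain c where "\<And>x y. 0 < x \<Longrightarrow> x < 1 \<Longrightarrow> 0 < y \<Longrightarrow> y < 1 \<Longrightarrow>
      two_point I x y = c * relent [x, 1 - x] [y, 1 - y]"
    using two_point_eq_c_relent[OF C] by blast
  from eq_on_osimplex_if_two_point_eq[OF C(3,4) C3_relent C4_relent this[unfolded two_point_def]]
  show "\<exists>c. \<forall>n p q. n \<ge> 1 \<longrightarrow> p \<in> osimplex n \<longrightarrow> q \<in> osimplex n \<longrightarrow> I p q = c * relent p q"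
    by blast
next
  assume "\<exists>c. \<forall>n p q. n \<ge> 1 \<longrightarrow> p \<in> osimplex n \<longrightarrow> q \<in> osimplex n \<longrightarrow> I p q = c * relent p q"
  then obtain c where c: "\<forall>n p q. n \<ge> 1 \<longrightarrow> p \<in> osimplex n \<longrightarrow> q \<in> osimplex n \<longrightarrow> I p q = c * relent p q"
    by blast
  have eq: "I p q = c * relent p q" if "p \<in> osimplex n" "q \<in> osimplex n" for n p q
    using c osimplex_dim_pos[OF that(1)] that by blast
  have "C1 I = C1 (\<lambda>p q. c * relent p q)" using eq by (rule C1_cong)
  moreover have "C2 I = C2 (\<lambda>p q. c * relent p q)" using eq by (rule C2_cong)
  moreover have "C3 I = C3 (\<lambda>p q. c * relent p q)" using eq by (rule C3_cong)
  moreover have "C4 I = C4 (\<lambda>p q. c * relent p q)" using eq by (rule C4_cong)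
  ultimately show "C1 I \<and> C2 I \<and> C3 I \<and> C4 I"
    using C1_relent C2_relent C3_relent C4_relent by blast
qed

end
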